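(* For every $n\ge0$, $$B^n=\sum_{m=0}^{\lfloor n/2\rfloor}[n-2m]!\Big(\sum_{\alpha\in\mathcal P_t(m\times(n-2m))}[\alpha_1+1]^2\cdots[\alpha_m+1]^2\Big)P_{n-2m}.$$
   Context: Fix $t\in\{0,1\}$. Let $\mathbf U^\imath_t=\mathbb Q(q)[B]$ be the polynomial algebra in $B$ over $\mathbb Q(q)$, $[n]=(q^n-q^{-n})/(q-q^{-1})$, $[n]!=[1]\cdots[n]$. The $\imath$-canonical basis is $P_n=\frac{B^{\sigma_t(n)}}{[n]!}\prod_{0\le k\le n-1,\ k\equiv t\ (2)}(B^2-[k]^2)$, where $\sigma_t(n)=0$ for $n$ even, $-1$ for $n$ odd and $t=0$, $1$ for $n$ odd and $t=1$ (when $\sigma_t(n)=-1$ the product contains the factor $B^2$, so $P_n$ is a polynomial). For $m,k\ge0$, $\mathcal P_t(m\times k)$ is the set of $\alpha\in\mathbb N^m$ with $0\le\alpha_1\le\cdots\le\alpha_m\le k$ and $\alpha_i\not\equiv t\pmod2$ for each $i$. *)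

theory Defs
  imports "HOL-Computational_Algebra.Polynomial" "HOL-Computational_Algebra.Fraction_Field"
begin

type_synonym Qq = "rat poly fract"

definition qvar :: Qq where
  "qvar = Fract [:0, 1:] 1"

definition qint :: "nat \<Rightarrow> Qq" where
  "qint n = (qvar ^ n - inverse qvar ^ n) / (qvar - inverse qvar)"

definition qfact :: "nat \<Rightarrow> Qq" where
  "qfact n = (\<Prod>i\<in>{1..n}. qint i)"

text \<open>The generator B of U^i_t = Q(q)[B].\<close>
definition Bgen :: "Qq poly" where
  "Bgen = [:0, 1:]"

definition sigma_t :: "nat \<Rightarrow> nat \<Rightarrow> int" where
  "sigma_t t n = (if even n then 0 else if t = 0 then -1 else 1)"

definition iprod :: "nat \<Rightarrow> nat \<Rightarrow> Qq poly" where
  "iprod t n = (\<Prod>k\<in>{k. k < n \<and> k mod 2 = t mod 2}. Bgen ^ 2 - [:qint k ^ 2:])"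

text \<open>The imath-canonical basis element P_n. When sigma_t n = -1 the product contains the
  factor B^2, so dividing by B is exact.\<close>
definition iCB :: "nat \<Rightarrow> nat \<Rightarrow> Qq poly" where
  "iCB t n = smult (inverse (qfact n))
     (if sigma_t t n = -1 then iprod t n div Bgen
      else Bgen ^ nat (sigma_t t n) * iprod t n)"

definition Pt :: "nat \<Rightarrow> nat \<Rightarrow> nat \<Rightarrow> nat list set" where
  "Pt t m k = {\<alpha>. length \<alpha> = m \<and> sorted \<alpha> \<and> (\<forall>a\<in>set \<alpha>. a \<le> k \<and> a mod 2 \<noteq> t mod 2)}"

end

theory Submission
  imports Defs
begin

(* Put Q_n = [n]! P_n. Splitting one factor off the product defining P_n gives the three-term
   recurrence B Q_j = Q_(j+1) + y_j Q_(j-1), where y_j = [j]^2 if j = t (mod 2) and y_j = 0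
   otherwise. Expanding B^n along it, the coefficient of Q_j obeys a tridiagonal recursion in n;
   since no two consecutive weights y_j, y_(j+1) are both nonzero, the coefficient with
   n - j = 2m is the complete homogeneous symmetric polynomial h_m(y_1, ..., y_(j+1)). Dropping
   the vanishing weights, h_m is exactly the sum over P_t(m x j) in the statement. *)

definition sorted_lists :: "nat \<Rightarrow> nat \<Rightarrow> nat list set" where
  "sorted_lists m k = {\<alpha>. length \<alpha> = m \<and> sorted \<alpha> \<and> (\<forall>a\<in>set \<alpha>. a < k)}"

definition complete_hom :: "(nat \<Rightarrow> 'a::comm_semiring_1) \<Rightarrow> nat \<Rightarrow> nat \<Rightarrow> 'a" where
  "complete_hom x m k = (\<Sum>\<alpha>\<in>sorted_lists m k. \<Prod>i<m. x (\<alpha> ! i))"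

lemma finite_sorted_lists: "finite (sorted_lists m k)"
  by (rule finite_subset[OF _ finite_lists_length_eq[OF finite_lessThan, of k m]])
     (auto simp: sorted_lists_def)

lemma sorted_lists_0: "sorted_lists 0 k = {[]}"
  by (auto simp: sorted_lists_def)

lemma sorted_lists_Suc_0: "sorted_lists (Suc m) 0 = {}"
  by (auto simp: sorted_lists_def length_Suc_conv)

lemma sorted_lists_Suc_Suc:
  "sorted_lists (Suc m) (Suc k) = sorted_lists (Suc m) k \<union> (\<lambda>\<beta>. \<beta> @ [k]) ` sorted_lists m (Suc k)"
proof (intro equalityI subsetI)
  fix \<alpha> assume \<alpha>: "\<alpha> \<in> sorted_lists (Suc m) (Suc k)"
  then obtain \<beta> l where \<beta>: "\<alpha> = \<beta> @ [l]" "length \<beta> = m"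
    by (auto simp: sorted_lists_def length_Suc_conv_rev)
  show "\<alpha> \<in> sorted_lists (Suc m) k \<union> (\<lambda>\<beta>. \<beta> @ [k]) ` sorted_lists m (Suc k)"
  proof (cases "l = k")
    case True
    then show ?thesis using \<alpha> \<beta> by (auto simp: sorted_lists_def sorted_append)
  next
    case False
    then show ?thesis using \<alpha> \<beta> by (fastforce simp: sorted_lists_def sorted_append)
  qed
qed (auto simp: sorted_lists_def sorted_append less_Suc_eq_le)

lemma complete_hom_0 [simp]: "complete_hom x 0 k = 1"
  by (simp add: complete_hom_def sorted_lists_0)

lemma complete_hom_Suc_0 [simp]: "complete_hom x (Suc m) 0 = 0"
  by (simp add: complete_hom_def sorted_lists_Suc_0)

lemma complete_hom_Suc_Suc:
  "complete_hom x (Suc m) (Suc k) = complete_hom x (Suc m) k + x k * complete_hom x m (Suc k)"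
proof -
  have disjoint: "sorted_lists (Suc m) k \<inter> (\<lambda>\<beta>. \<beta> @ [k]) ` sorted_lists m (Suc k) = {}"
    by (auto simp: sorted_lists_def)
  have "(\<Sum>\<alpha>\<in>(\<lambda>\<beta>. \<beta> @ [k]) ` sorted_lists m (Suc k). \<Prod>i<Suc m. x (\<alpha> ! i))
      = (\<Sum>\<beta>\<in>sorted_lists m (Suc k). \<Prod>i<Suc m. x ((\<beta> @ [k]) ! i))"
    by (simp add: sum.reindex inj_on_def)
  also have "\<dots> = x k * complete_hom x m (Suc k)"
    unfolding complete_hom_def sum_distrib_left
    by (rule sum.cong) (auto simp: sorted_lists_def nth_append mult.commute intro!: prod.cong)
  finally show ?thesis
    unfolding complete_hom_def sorted_lists_Suc_Suc
    by (simp add: sum.union_disjoint finite_sorted_lists disjoint)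
qed

lemma complete_hom_absorb:
  assumes "x k * x (Suc k) = 0"
  shows "x k * complete_hom x m (Suc (Suc k)) = x k * complete_hom x m (Suc k)"
proof (cases m)
  case (Suc m')
  have "x k * complete_hom x m (Suc (Suc k))
      = x k * complete_hom x m (Suc k) + x k * x (Suc k) * complete_hom x m' (Suc (Suc k))"
    by (simp add: Suc complete_hom_Suc_Suc distrib_left mult.assoc)
  then show ?thesis using assms by simp
qed simp

primrec tridiag_coeff :: "(nat \<Rightarrow> 'a::comm_semiring_1) \<Rightarrow> nat \<Rightarrow> nat \<Rightarrow> 'a" where
  "tridiag_coeff y 0 j = (if j = 0 then 1 else 0)"
| "tridiag_coeff y (Suc n) j =
     (case j of 0 \<Rightarrow> 0 | Suc i \<Rightarrow> tridiag_coeff y n i) + y (Suc j) * tridiag_coeff y n (Suc j)"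

lemma tridiag_coeff_eq_0: "n < j \<Longrightarrow> tridiag_coeff y n j = 0"
  by (induction n arbitrary: j) (auto split: nat.split)

lemma power_eq_sum_tridiag_coeff:
  fixes b :: "'a::comm_semiring_1 poly" and Q :: "nat \<Rightarrow> 'a poly"
  assumes Q0: "b * Q 0 = Q 1"
    and QSuc: "\<And>j. b * Q (Suc j) = Q (Suc (Suc j)) + smult (y (Suc j)) (Q j)"
  shows "b ^ n * Q 0 = (\<Sum>j\<le>n. smult (tridiag_coeff y n j) (Q j))"
proof (induction n)
  case (Suc n)
  let ?c = "tridiag_coeff y n"
  define g where "g j = smult (y (Suc j) * ?c (Suc j)) (Q j)" for j
  have "b ^ Suc n * Q 0 = (\<Sum>j\<le>Suc n. smult (?c j) (b * Q j))"
    by (simp add: Suc sum_distrib_left tridiag_coeff_eq_0 mult.assoc)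
  also have "\<dots> = (\<Sum>j\<le>Suc n. smult (?c j) (Q (Suc j))) + (\<Sum>j\<le>n. g j)"
    by (simp add: sum.atMost_Suc_shift Q0 QSuc smult_add_right sum.distrib g_def mult.commute add.assoc
        del: sum.atMost_Suc)
  also have "(\<Sum>j\<le>n. g j) = g 0 + (\<Sum>j\<le>n. g (Suc j))"
    by (subst sum.atMost_Suc_shift[symmetric]) (simp add: g_def tridiag_coeff_eq_0)
  also have "(\<Sum>j\<le>Suc n. smult (?c j) (Q (Suc j))) = (\<Sum>j\<le>n. smult (?c j) (Q (Suc j)))"
    by (simp add: tridiag_coeff_eq_0)
  also have "(\<Sum>j\<le>n. smult (?c j) (Q (Suc j))) + (g 0 + (\<Sum>j\<le>n. g (Suc j)))
      = (\<Sum>j\<le>Suc n. smult (tridiag_coeff y (Suc n) j) (Q j))"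
    by (simp add: sum.atMost_Suc_shift g_def tridiag_coeff_eq_0 smult_add_left sum.distrib
        mult.commute del: sum.atMost_Suc)
  finally show ?case .
qed simp

lemma tridiag_coeff_eq_complete_hom:
  assumes alternating: "\<And>j. y j * y (Suc j) = 0"
  shows "tridiag_coeff y n j =
    (if j \<le> n \<and> even (n - j) then complete_hom (\<lambda>a. y (Suc a)) ((n - j) div 2) (Suc j) else 0)"
proof (induction n arbitrary: j)
  case (Suc n)
  let ?h = "complete_hom (\<lambda>a. y (Suc a))"
  have absorb: "y (Suc k) * ?h m (Suc (Suc k)) = y (Suc k) * ?h m (Suc k)" for k m
    using complete_hom_absorb[of "\<lambda>a. y (Suc a)" k] alternating by simp
  show ?case
  proof (cases j)
    case 0
    show ?thesis
    proof (cases "even n")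
      case False
      then obtain m where n: "n = Suc (2 * m)" by (metis oddE Suc_eq_plus1)
      have "tridiag_coeff y (Suc n) 0 = y 1 * tridiag_coeff y n 1"
        by simp
      also have "\<dots> = y 1 * ?h m (Suc 1)"
        unfolding Suc.IH[of 1] by (simp add: n)
      also have "\<dots> = ?h (Suc m) 1"
        using absorb[of 0 m] by (simp add: complete_hom_Suc_Suc)
      finally show ?thesis
        by (simp add: 0 n)
    qed (auto simp: 0 Suc.IH)
  next
    case (Suc i)
    show ?thesis
    proof (cases "i \<le> n \<and> even (n - i)")
      case True
      then obtain m where n: "n = i + 2 * m" by (metis evenE le_add_diff_inverse)
      show ?thesis
      proof (cases m)
        case (Suc m')
        have "tridiag_coeff y (Suc n) (Suc i)
            = tridiag_coeff y n i + y (Suc (Suc i)) * tridiag_coeff y n (Suc (Suc i))"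
          by simp
        also have "\<dots> = ?h (Suc m') (Suc i) + y (Suc (Suc i)) * ?h m' (Suc (Suc (Suc i)))"
          unfolding Suc.IH by (simp add: n Suc)
        also have "\<dots> = ?h (Suc m') (Suc (Suc i))"
          using absorb[of "Suc i" m'] by (simp add: complete_hom_Suc_Suc)
        finally show ?thesis
          by (simp add: \<open>j = Suc i\<close> n Suc)
      qed (use Suc.IH[of i] Suc.IH[of "Suc (Suc i)"] in \<open>simp add: \<open>j = Suc i\<close> n\<close>)
    next
      case False
      then show ?thesis by (auto simp: Suc Suc.IH)
    qed
  qed
qed simp

lemma sum_atMost_even_diff:
  fixes f :: "nat \<Rightarrow> 'a::comm_monoid_add" and n :: nat
  assumes "\<And>j. j \<le> n \<Longrightarrow> odd (n - j) \<Longrightarrow> f j = 0"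
  shows "(\<Sum>j\<le>n. f j) = (\<Sum>m\<le>n div 2. f (n - 2 * m))"
proof -
  have "(\<Sum>j\<le>n. f j) = (\<Sum>j\<in>(\<lambda>m. n - 2 * m) ` {..n div 2}. f j)"
  proof (rule sum.mono_neutral_right)
    show "\<forall>j\<in>{..n} - (\<lambda>m. n - 2 * m) ` {..n div 2}. f j = 0"
    proof
      fix j assume j: "j \<in> {..n} - (\<lambda>m. n - 2 * m) ` {..n div 2}"
      have "odd (n - j)"
      proof
        assume "even (n - j)"
        then obtain m where "n - j = 2 * m" by blast
        then have "j = n - 2 * m" "m \<in> {..n div 2}" using j by auto
        then show False using j by blast
      qed
      then show "f j = 0" using j assms by simp
    qed
  qed auto
  also have "\<dots> = (\<Sum>m\<le>n div 2. f (n - 2 * m))"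
    by (rule sum.reindex_cong[of "\<lambda>m. n - 2 * m"]) (auto simp: inj_on_def)
  finally show ?thesis .
qed

lemma qvar_power: "qvar ^ n = Fract ([:0, 1:] ^ n) 1"
  by (induction n) (auto simp: qvar_def One_fract_def)

lemma qvar_power_eq_1_iff: "qvar ^ n = 1 \<longleftrightarrow> n = 0"
proof
  assume "qvar ^ n = 1"
  then have "([:0, 1:] ^ n :: rat poly) = 1"
    by (simp add: qvar_power One_fract_def eq_fract)
  then show "n = 0"
    using degree_power_eq[of "[:0, 1 :: rat:]" n] by simp
qed simp

lemma qint_eq_0_iff: "qint n = 0 \<longleftrightarrow> n = 0"
proof -
  have qvar_nonzero: "qvar \<noteq> 0"
    by (simp add: qvar_def Zero_fract_def eq_fract)
  have numerator: "qvar ^ k - inverse qvar ^ k = 0 \<longleftrightarrow> k = 0" for k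
  proof -
    have "qvar ^ k - inverse qvar ^ k = 0 \<longleftrightarrow> qvar ^ k = inverse (qvar ^ k)"
      by (simp add: power_inverse)
    also have "\<dots> \<longleftrightarrow> qvar ^ k * qvar ^ k = 1"
      using qvar_nonzero by (metis inverse_unique right_inverse power_not_zero)
    also have "\<dots> \<longleftrightarrow> k = 0"
      by (simp add: power_add[symmetric] qvar_power_eq_1_iff)
    finally show ?thesis .
  qed
  show ?thesis
    using numerator[of n] numerator[of 1] by (simp add: qint_def)
qed

lemma qint_0: "qint 0 = 0"
  by (simp add: qint_eq_0_iff)

lemma qfact_nonzero: "qfact n \<noteq> 0"
  by (simp add: qfact_def qint_eq_0_iff)

definition iCB_scaled :: "nat \<Rightarrow> nat \<Rightarrow> Qq poly" where
  "iCB_scaled t n =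
     (if sigma_t t n = -1 then iprod t n div Bgen else Bgen ^ nat (sigma_t t n) * iprod t n)"

lemma smult_qfact_iCB: "smult (qfact n) (iCB t n) = iCB_scaled t n"
  by (simp add: iCB_def qfact_nonzero flip: iCB_scaled_def)

definition iCB_weight :: "nat \<Rightarrow> nat \<Rightarrow> Qq" where
  "iCB_weight t j = (if j mod 2 = t mod 2 then qint j ^ 2 else 0)"

lemma iCB_weight_alternating: "iCB_weight t j * iCB_weight t (Suc j) = 0"
  by (simp add: iCB_weight_def) presburger

lemma iprod_0: "iprod t 0 = 1"
  by (simp add: iprod_def)

lemma iprod_Suc:
  "iprod t (Suc n) = (if n mod 2 = t mod 2 then Bgen ^ 2 - [:qint n ^ 2:] else 1) * iprod t n"
proof -
  have "{k. k < Suc n \<and> k mod 2 = t mod 2} =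
      (if n mod 2 = t mod 2 then insert n else id) {k. k < n \<and> k mod 2 = t mod 2}"
    by (auto simp: less_Suc_eq)
  then show ?thesis by (simp add: iprod_def)
qed

lemma Bgen_dvd_iprod_0:
  assumes "0 < n"
  shows "Bgen dvd iprod 0 n"
proof -
  from assms have "Bgen ^ 2 - [:qint 0 ^ 2:] dvd iprod 0 n"
    unfolding iprod_def by (intro dvd_prodI) auto
  then have "Bgen ^ 2 dvd iprod 0 n"
    by (simp add: qint_0)
  then show ?thesis
    by (rule dvd_trans[rotated]) (simp add: power2_eq_square)
qed

lemma iCB_scaled_0: "iCB_scaled t 0 = 1"
  by (simp add: iCB_scaled_def sigma_t_def iprod_0)

lemma iCB_scaled_Suc:
  assumes "t \<in> {0, 1}" "j mod 2 \<noteq> t mod 2"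
  shows "iCB_scaled t (Suc j) = Bgen * iCB_scaled t j"
proof (cases "t = 0")
  case True
  then have odd: "odd j" "j mod 2 = 1" using assms(2) by presburger+
  then have "Bgen dvd iprod 0 j" by (intro Bgen_dvd_iprod_0) (cases j, auto)
  then show ?thesis
    using True odd by (simp add: iCB_scaled_def sigma_t_def iprod_Suc)
next
  case False
  then have "t = 1" using assms(1) by simp
  then have "even j" "j mod 2 = 0" using assms(2) by presburger+
  then show ?thesis
    using \<open>t = 1\<close> by (simp add: iCB_scaled_def sigma_t_def iprod_Suc)
qed

lemma iCB_scaled_Suc_Suc:
  assumes "t \<in> {0, 1}" "Suc j mod 2 = t mod 2"
  shows "iCB_scaled t (Suc (Suc j)) = (Bgen ^ 2 - [:qint (Suc j) ^ 2:]) * iCB_scaled t j"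
proof (cases "t = 0")
  case True
  then have odd: "odd j" "j mod 2 = 1" using assms(2) by presburger+
  then have "Bgen dvd iprod 0 j" by (intro Bgen_dvd_iprod_0) (cases j, auto)
  then show ?thesis
    using True odd by (simp add: iCB_scaled_def sigma_t_def iprod_Suc div_mult_swap)
next
  case False
  then have "t = 1" using assms(1) by simp
  then have "even j" "j mod 2 = 0" using assms(2) by presburger+
  then show ?thesis
    using \<open>t = 1\<close> assms(2) by (simp add: iCB_scaled_def sigma_t_def iprod_Suc mult_ac)
qed

lemma Bgen_mult_iCB_scaled_0:
  assumes "t \<in> {0, 1}"
  shows "Bgen * iCB_scaled t 0 = iCB_scaled t 1"
proof -
  have "Bgen \<noteq> 0" by (simp add: Bgen_def)
  then show ?thesis
    using assms by (auto simp: iCB_scaled_def sigma_t_def iprod_Suc iprod_0 qint_0 power2_eq_square)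
qed

lemma Bgen_mult_iCB_scaled_Suc:
  assumes t: "t \<in> {0, 1}"
  shows "Bgen * iCB_scaled t (Suc j) =
    iCB_scaled t (Suc (Suc j)) + smult (iCB_weight t (Suc j)) (iCB_scaled t j)"
proof (cases "Suc j mod 2 = t mod 2")
  case True
  then have "j mod 2 \<noteq> t mod 2" by presburger
  then have "Bgen * iCB_scaled t (Suc j) = Bgen ^ 2 * iCB_scaled t j"
    using iCB_scaled_Suc[OF t] by (simp add: power2_eq_square)
  then show ?thesis
    using iCB_scaled_Suc_Suc[OF t True] True
    by (simp add: iCB_weight_def algebra_simps)
next
  case False
  then show ?thesis
    using iCB_scaled_Suc[OF t False] by (simp add: iCB_weight_def)
qed

lemma sum_Pt_eq_complete_hom:
  "(\<Sum>\<alpha>\<in>Pt t m k. \<Prod>i<m. qint (\<alpha> ! i + 1) ^ 2) =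
   complete_hom (\<lambda>a. iCB_weight t (Suc a)) m (Suc k)"
proof -
  have "Pt t m k \<subseteq> sorted_lists m (Suc k)"
    by (auto simp: Pt_def sorted_lists_def)
  moreover have "(\<Prod>i<m. iCB_weight t (Suc (\<alpha> ! i))) = 0"
    if "\<alpha> \<in> sorted_lists m (Suc k) - Pt t m k" for \<alpha>
  proof -
    have "length \<alpha> = m" "\<exists>a\<in>set \<alpha>. a mod 2 = t mod 2"
      using that by (auto simp: Pt_def sorted_lists_def less_Suc_eq_le)
    then obtain i where "i < m" "\<alpha> ! i mod 2 = t mod 2"
      by (auto simp: in_set_conv_nth)
    moreover from this have "Suc (\<alpha> ! i) mod 2 \<noteq> t mod 2"
      by presburger
    ultimately show ?thesis
      by (intro prod_zero) (auto simp: iCB_weight_def intro!: bexI[of _ i])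
  qed
  moreover have "(\<Prod>i<m. qint (\<alpha> ! i + 1) ^ 2) = (\<Prod>i<m. iCB_weight t (Suc (\<alpha> ! i)))"
    if "\<alpha> \<in> Pt t m k" for \<alpha>
  proof (rule prod.cong)
    fix i assume "i \<in> {..<m}"
    then have "\<alpha> ! i mod 2 \<noteq> t mod 2"
      using that by (auto simp: Pt_def)
    then have "Suc (\<alpha> ! i) mod 2 = t mod 2"
      by presburger
    then show "qint (\<alpha> ! i + 1) ^ 2 = iCB_weight t (Suc (\<alpha> ! i))"
      by (simp add: iCB_weight_def)
  qed simp
  ultimately show ?thesis
    unfolding complete_hom_def by (intro sum.mono_neutral_cong_left finite_sorted_lists) auto
qed

theorem corollary2p13:
  fixes t n :: nat
  assumes "t \<in> {0, 1}"
  shows "Bgen ^ n =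
    (\<Sum>m = 0..n div 2.
       smult (qfact (n - 2 * m) *
              (\<Sum>\<alpha>\<in>Pt t m (n - 2 * m). \<Prod>i<m. qint (\<alpha> ! i + 1) ^ 2))
             (iCB t (n - 2 * m)))"
proof -
  let ?y = "iCB_weight t"
  have "Bgen ^ n = Bgen ^ n * iCB_scaled t 0"
    by (simp add: iCB_scaled_0)
  also have "\<dots> = (\<Sum>j\<le>n. smult (tridiag_coeff ?y n j) (iCB_scaled t j))"
    by (intro power_eq_sum_tridiag_coeff Bgen_mult_iCB_scaled_0 Bgen_mult_iCB_scaled_Suc assms)
  also have "\<dots> = (\<Sum>m\<le>n div 2. smult (tridiag_coeff ?y n (n - 2 * m)) (iCB_scaled t (n - 2 * m)))"
    by (rule sum_atMost_even_diff) (simp add: tridiag_coeff_eq_complete_hom iCB_weight_alternating)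
  also have "\<dots> = (\<Sum>m\<le>n div 2. smult (complete_hom (\<lambda>a. ?y (Suc a)) m (Suc (n - 2 * m)))
                                      (smult (qfact (n - 2 * m)) (iCB t (n - 2 * m))))"
    by (intro sum.cong refl)
       (simp add: tridiag_coeff_eq_complete_hom iCB_weight_alternating smult_qfact_iCB)
  finally show ?thesis
    unfolding sum_Pt_eq_complete_hom by (simp add: atLeast0AtMost mult.commute)
qed

end
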